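(* In the setting of the context, for $1\le i\le 2n$ let $A_1(i,c)$ be the area of the polygon with vertices $P_i,P_{i+1},\dots,P_{i+n}$ and $A_2(i,c)$ the area of the polygon with vertices $P_{i+n},P_{i+n+1},\dots,P_{i}$ (the two parts into which the diagonal $P_iP_{i+n}$ cuts $P$). Then $$A_1(i,c)-A_2(i,c)=4c\beta_i,\qquad 1\le i\le 2n.$$
   Context: $[x,y]$ denotes the determinant of the matrix with columns $x,y\in\mathbb{R}^2$. Fix $n\ge2$; indices (integer and half-integer) are read modulo $2n$. $U$ is a convex $2n$-gon with distinct vertices $U_1,\dots,U_{2n}$ in counterclockwise order with $U_{i+n}=-U_i$. Let $c>0$ and let $P$ be a convex polygon with nonempty interior and vertex list $P_1,\dots,P_{2n}$ (listed counterclockwise, consecutive entries may coincide) with $P_{i+1}-P_i$ a nonnegative multiple of $U_{i+1}-U_i$ and $P_i-P_{i+n}=2cU_i$ for all $i$. Let $M_i=\frac12(P_i+P_{i+n})$ (so $P_i=M_i+cU_i$), define $\alpha_{i+\frac12}$ by $M_{i+1}-M_i=\alpha_{i+\frac12}(U_{i+1}-U_i)$, and set $\beta_i=\frac12\sum_{j=i}^{i+n-1}\alpha_{j+\frac12}[U_j,U_{j+1}]$. *)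

theory Defs
  imports "HOL-Analysis.Analysis"
begin

text \<open>Points of the plane are pairs of reals. det2 x y is the determinant [x,y]
of the 2x2 matrix with columns x and y.\<close>
definition det2 :: "real \<times> real \<Rightarrow> real \<times> real \<Rightarrow> real" where
  "det2 x y = fst x * snd y - snd x * fst y"

end

theory Submission
  imports Defs
begin

(*
  Cut along the diagonal from P i to P (i + n), each half of P is a convex polygon, so triangulating
  it from its first vertex P s gives twice its area as the fan sum
  sum_k [P (s + k) - P s, P (s + k + 1) - P s]; adding the triangles one at a time, each meets the
  hull built so far only along a line.  The sign conditions behind this come from
  [U (a + 1) - U a, U (b + 1) - U b] > 0 for a < b < a + n, which the Pluecker identity derives from
  the strict convexity and central symmetry of U.  Substituting P (i + k) = M (i + k) + c U (i + k)
  and P (i + n + k) = M (i + k) - c U (i + k), the difference of the two fan sums is linear in c,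
  and M (k + 1) - M k = alpha k (U (k + 1) - U k) makes it telescope to
  4 c sum_k alpha (i + k) [U (i + k), U (i + k + 1)].
*)

lemma det2_add_left: "det2 (x + y) z = det2 x z + det2 y z"
  and det2_add_right: "det2 z (x + y) = det2 z x + det2 z y"
  and det2_diff_left: "det2 (x - y) z = det2 x z - det2 y z"
  and det2_diff_right: "det2 z (x - y) = det2 z x - det2 z y"
  and det2_scaleR_left: "det2 (a *\<^sub>R x) y = a * det2 x y"
  and det2_scaleR_right: "det2 x (a *\<^sub>R y) = a * det2 x y"
  and det2_minus_left: "det2 (- x) y = - det2 x y"
  and det2_minus_right: "det2 x (- y) = - det2 x y"
  and det2_zero_left: "det2 0 x = 0"
  and det2_zero_right: "det2 x 0 = 0"
  and det2_self: "det2 x x = 0"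
  by (simp_all add: det2_def algebra_simps)

lemmas det2_bilinear = det2_add_left det2_add_right det2_diff_left det2_diff_right
  det2_scaleR_left det2_scaleR_right det2_minus_left det2_minus_right
  det2_zero_left det2_zero_right det2_self

lemma det2_commute: "det2 y x = - det2 x y"
  by (simp add: det2_def)

lemma det2_rotate: "det2 (b - a) (c - a) = det2 (c - b) (a - b)"
  by (simp add: det2_def algebra_simps)

lemma det2_sum_left: "det2 (sum f A) y = (\<Sum>a\<in>A. det2 (f a) y)"
  by (induction A rule: infinite_finite_induct) (simp_all add: det2_bilinear)

lemma det2_sum_right: "det2 y (sum f A) = (\<Sum>a\<in>A. det2 y (f a))"
  by (induction A rule: infinite_finite_induct) (simp_all add: det2_bilinear)

lemma det2_pluecker: "det2 x y * det2 z w = det2 x z * det2 y w - det2 x w * det2 y z"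
  by (simp add: det2_def algebra_simps)

lemma det2_affine_combination:
  assumes "u + v = 1"
  shows "det2 d (u *\<^sub>R x + v *\<^sub>R y - a) = u * det2 d (x - a) + v * det2 d (y - a)"
proof -
  have "u *\<^sub>R x + v *\<^sub>R y - a = u *\<^sub>R (x - a) + v *\<^sub>R (y - a)"
    using assms by (simp add: algebra_simps flip: scaleR_add_left)
  then show ?thesis by (simp add: det2_bilinear)
qed

lemma det2_eq_0_imp_parallel:
  assumes "det2 d e = 0" "d \<noteq> 0"
  shows "e = ((d \<bullet> e) / (d \<bullet> d)) *\<^sub>R d"
proof -
  obtain d1 d2 e1 e2 where de: "d = (d1, d2)" "e = (e1, e2)" by fastforce
  have "d1 * d1 + d2 * d2 \<noteq> 0" using assms(2) by (auto simp: de zero_prod_def)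
  then show ?thesis using assms(1) unfolding de
    by (simp add: det2_def inner_prod_def prod_eq_iff field_simps)
qed

section \<open>Area of a triangle\<close>

(* Lebesgue measure on real \<times> real is read off from real^2, where content_triangle is available. *)
definition pair_of_vec2 :: "real^2 \<Rightarrow> real \<times> real" where
  "pair_of_vec2 v = (v$1, v$2)"

definition vec2_of_pair :: "real \<times> real \<Rightarrow> real^2" where
  "vec2_of_pair p = vector [fst p, snd p]"

lemma vimage_pair_of_vec2: "pair_of_vec2 -` K = vec2_of_pair ` K"
proof
  have "\<And>v. vec2_of_pair (pair_of_vec2 v) = v"
    by (simp add: vec2_of_pair_def pair_of_vec2_def vec_eq_iff forall_2)
  then show "pair_of_vec2 -` K \<subseteq> vec2_of_pair ` K"
    by (metis image_eqI subsetI vimageE)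
  show "vec2_of_pair ` K \<subseteq> pair_of_vec2 -` K"
    by (auto simp: vec2_of_pair_def pair_of_vec2_def)
qed

lemma pair_of_vec2_measurable [measurable]: "pair_of_vec2 \<in> borel_measurable borel"
  unfolding pair_of_vec2_def by (intro borel_measurable_continuous_onI continuous_intros)

lemma distr_lborel_pair_of_vec2: "distr lborel borel pair_of_vec2 = lborel"
proof (rule lborel_eqI[symmetric])
  fix l u :: "real \<times> real"
  assume le: "\<And>b. b \<in> Basis \<Longrightarrow> l \<bullet> b \<le> u \<bullet> b"
  have l: "fst l \<le> fst u" "snd l \<le> snd u"
    using le[of "(1,0)"] le[of "(0,1)"] by (auto simp: Basis_prod_def inner_prod_def)
  define a :: "real^2" where "a = vector [fst l, snd l]"
  define b :: "real^2" where "b = vector [fst u, snd u]"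
  have box: "pair_of_vec2 -` box l u = box a b"
    by (auto simp: pair_of_vec2_def a_def b_def mem_box_cart forall_2 mem_box Basis_prod_def inner_prod_def)
  have Basis: "(Basis :: (real^2) set) = {axis 1 1, axis 2 1}"
    by (auto simp: Basis_vec_def) (metis exhaust_2)
  have ab: "\<And>x. x \<in> Basis \<Longrightarrow> a \<bullet> x \<le> b \<bullet> x"
    using l by (auto simp: Basis a_def b_def inner_axis)
  have "emeasure (distr lborel borel pair_of_vec2) (box l u) = emeasure lborel (box a b)"
    by (simp add: emeasure_distr box)
  also have "\<dots> = (\<Prod>x\<in>Basis. (b - a) \<bullet> x)"
    by (rule emeasure_lborel_box[OF ab])
  also have "\<dots> = (fst u - fst l) * (snd u - snd l)"
    by (simp add: Basis axis_eq_axis inner_axis a_def b_def)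
  also have "\<dots> = (\<Prod>b\<in>Basis. (u - l) \<bullet> b)"
    by (simp add: Basis_prod_def inner_prod_def mult.commute)
  finally show "emeasure (distr lborel borel pair_of_vec2) (box l u) = (\<Prod>b\<in>Basis. (u - l) \<bullet> b)" .
qed simp

lemma measure_vec2_of_pair_image:
  assumes "K \<in> sets borel"
  shows "measure lebesgue (vec2_of_pair ` K) = measure lebesgue K"
proof -
  have "pair_of_vec2 -` K \<in> sets borel"
    by (rule measurable_sets_borel[OF pair_of_vec2_measurable assms])
  then have "measure lebesgue (vec2_of_pair ` K) = measure lborel (pair_of_vec2 -` K)"
    by (simp add: vimage_pair_of_vec2 measure_completion)
  also have "\<dots> = measure (distr lborel borel pair_of_vec2) K"
    using assms by (simp add: measure_distr)
  also have "\<dots> = measure lebesgue K"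
    using assms by (simp add: distr_lborel_pair_of_vec2 measure_completion)
  finally show ?thesis .
qed

lemma measure_convex_hull_triangle:
  fixes A B C :: "real \<times> real"
  shows "measure lebesgue (convex hull {A, B, C}) = \<bar>det2 (B - A) (C - A)\<bar> / 2"
proof -
  have lin: "linear vec2_of_pair"
    by (rule linearI) (auto simp: vec2_of_pair_def vec_eq_iff forall_2)
  have "measure lebesgue (convex hull {A, B, C}) = measure lebesgue (vec2_of_pair ` (convex hull {A, B, C}))"
    by (simp add: measure_vec2_of_pair_image borel_compact finite_imp_compact_convex_hull)
  also have "\<dots> = measure lebesgue (convex hull {vec2_of_pair A, vec2_of_pair B, vec2_of_pair C})"
    by (simp add: convex_hull_linear_image lin)
  also have "\<dots> = measure lborel (convex hull {vec2_of_pair A, vec2_of_pair B, vec2_of_pair C})"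
    by (simp add: measure_completion borel_compact finite_imp_compact_convex_hull)
  also have "\<dots> = \<bar>det2 (B - A) (C - A)\<bar> / 2"
    unfolding content_triangle by (simp add: vec2_of_pair_def det2_def abs_minus_commute algebra_simps)
  finally show ?thesis .
qed

section \<open>Adding a vertex to a convex fan\<close>

lemma convex_det2_le: "convex {w. det2 d (w - a) \<le> 0}"
  and convex_det2_ge: "convex {w. 0 \<le> det2 d (w - a)}"
  and convex_det2_eq: "convex {w. det2 d (w - a) = 0}"
  unfolding convex_def using det2_affine_combination
  by (smt (verit) mem_Collect_eq mult_nonneg_nonpos mult_nonneg_nonneg)+

lemma negligible_det2_line:
  assumes "d \<noteq> 0"
  shows "negligible {w. det2 d (w - a) = 0}"
proof -
  have "{w. det2 d (w - a) = 0} = {w. (- snd d, fst d) \<bullet> w = (- snd d, fst d) \<bullet> a}"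
    by (auto simp: det2_def inner_prod_def algebra_simps)
  moreover have "(- snd d, fst d) \<noteq> 0"
    using assms by (auto simp: prod_eq_iff)
  ultimately show ?thesis
    by (metis negligible_hyperplane)
qed

lemma det2_barycentric:
  fixes a p q x :: "real \<times> real"
  defines "G \<equiv> det2 (p - a) (q - a)"
  assumes "G \<noteq> 0"
  obtains u v w where "x = u *\<^sub>R a + v *\<^sub>R p + w *\<^sub>R q" "u + v + w = 1"
    "u = det2 (q - p) (x - p) / G" "v = - det2 (q - a) (x - a) / G" "w = det2 (p - a) (x - a) / G"
proof
  have x: "G *\<^sub>R x = det2 (q - p) (x - p) *\<^sub>R a - det2 (q - a) (x - a) *\<^sub>R p + det2 (p - a) (x - a) *\<^sub>R q"
    by (simp add: G_def det2_def prod_eq_iff algebra_simps)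
  show "x = (det2 (q - p) (x - p) / G) *\<^sub>R a + (- det2 (q - a) (x - a) / G) *\<^sub>R p
              + (det2 (p - a) (x - a) / G) *\<^sub>R q"
    using arg_cong[OF x, of "scaleR (1 / G)"] assms(2) by (simp add: scaleR_add_right scaleR_diff_right)
  have "det2 (q - p) (x - p) - det2 (q - a) (x - a) + det2 (p - a) (x - a) = G"
    by (simp add: G_def det2_def algebra_simps)
  then show "det2 (q - p) (x - p) / G + - det2 (q - a) (x - a) / G + det2 (p - a) (x - a) / G = 1"
    using assms(2) by (simp add: divide_simps)
qed auto

lemma mem_convex_hull_triangle_det2:
  assumes G: "det2 (p - a) (q - a) > 0"
    and "0 \<le> det2 (p - a) (x - a)" "det2 (q - a) (x - a) \<le> 0" "0 \<le> det2 (q - p) (x - p)"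
  shows "x \<in> convex hull {a, p, q}"
proof -
  obtain u v w where x: "x = u *\<^sub>R a + v *\<^sub>R p + w *\<^sub>R q" "u + v + w = 1"
    and uvw: "u = det2 (q - p) (x - p) / det2 (p - a) (q - a)"
      "v = - det2 (q - a) (x - a) / det2 (p - a) (q - a)" "w = det2 (p - a) (x - a) / det2 (p - a) (q - a)"
    using G by (metis det2_barycentric less_irrefl)
  have "0 \<le> u" "0 \<le> v" "0 \<le> w"
    unfolding uvw using assms by (simp_all add: divide_nonneg_pos divide_nonpos_pos)
  with x show ?thesis
    unfolding convex_hull_3 by blast
qed

lemma mem_closed_segment_det2:
  assumes G: "det2 (p - a) (q - a) > 0"
    and "det2 (p - a) (x - a) = 0" "det2 (q - a) (x - a) \<le> 0" "0 \<le> det2 (q - p) (x - p)"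
  shows "x \<in> closed_segment a p"
proof -
  obtain u v w where x: "x = u *\<^sub>R a + v *\<^sub>R p + w *\<^sub>R q" "u + v + w = 1"
    and uvw: "u = det2 (q - p) (x - p) / det2 (p - a) (q - a)"
      "v = - det2 (q - a) (x - a) / det2 (p - a) (q - a)" "w = det2 (p - a) (x - a) / det2 (p - a) (q - a)"
    using G by (metis det2_barycentric less_irrefl)
  have "0 \<le> u" "0 \<le> v" "w = 0"
    unfolding uvw using assms by (simp_all add: divide_nonneg_pos divide_nonpos_pos)
  then have "x = (1 - v) *\<^sub>R a + v *\<^sub>R p" "v \<le> 1"
    using x by (simp_all add: eq_diff_eq)
  with \<open>0 \<le> v\<close> show ?thesis
    unfolding closed_segment_def by blast
qed

lemma mem_closed_segment_shrink:
  fixes y q :: "'a::real_vector"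
  assumes "0 \<le> u" "u \<le> r" "0 < r"
  shows "(1 - u) *\<^sub>R y + u *\<^sub>R q \<in> closed_segment y ((1 - r) *\<^sub>R y + r *\<^sub>R q)"
proof -
  have "(1 - u) *\<^sub>R y + u *\<^sub>R q = (1 - u / r) *\<^sub>R y + (u / r) *\<^sub>R ((1 - r) *\<^sub>R y + r *\<^sub>R q)"
    using assms(3) by (simp add: algebra_simps flip: scaleR_add_left)
  moreover have "0 \<le> u / r" "u / r \<le> 1"
    using assms by auto
  ultimately show ?thesis
    unfolding closed_segment_def by blast
qed

lemma mem_convex_hull_insert_below_line:
  fixes S :: "(real \<times> real) set"
  assumes "a \<in> S" "p \<in> S" and G: "det2 (p - a) (q - a) > 0"
    and right_ap: "\<forall>w\<in>S. det2 (p - a) (w - a) \<le> 0"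
    and right_aq: "\<forall>w\<in>S. det2 (q - a) (w - a) \<le> 0"
    and left_pq: "\<forall>w\<in>S. 0 \<le> det2 (q - p) (w - p)"
    and x: "x \<in> convex hull (insert q S)" and below: "det2 (p - a) (x - a) < 0"
  shows "x \<in> convex hull S"
proof -
  let ?g = "\<lambda>w. det2 (p - a) (w - a)"
  have C: "convex hull (insert q S) \<subseteq> {w. det2 (q - a) (w - a) \<le> 0} \<inter> {w. 0 \<le> det2 (q - p) (w - p)}"
    using right_aq left_pq
    by (intro hull_minimal) (auto simp: det2_self intro: convex_Int convex_det2_le convex_det2_ge)
  obtain u v y where u: "0 \<le> u" "0 \<le> v" "u + v = 1" and y: "y \<in> convex hull S"
    and "x = u *\<^sub>R q + v *\<^sub>R y"
    using x assms(1) convex_hull_insert[of S q] by blast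
  then have x_eq: "x = (1 - u) *\<^sub>R y + u *\<^sub>R q"
    by (simp add: eq_diff_eq add.commute)
  (* z is where the segment from y to q crosses the line through a and p; x lies between y and z *)
  define r where "r = - ?g y / (?g q - ?g y)"
  define z where "z = (1 - r) *\<^sub>R y + r *\<^sub>R q"
  have "convex hull S \<subseteq> {w. ?g w \<le> 0}"
    using right_ap by (intro hull_minimal) (auto simp: convex_det2_le)
  then have gy: "?g y \<le> 0"
    using y by blast
  have "?g x = (1 - u) * ?g y + u * ?g q"
    unfolding x_eq by (rule det2_affine_combination) simp
  then have "u * (?g q - ?g y) < - ?g y"
    using below by (simp add: algebra_simps)
  moreover have den: "0 < ?g q - ?g y"
    using G gy by simp
  ultimately have r: "u < r" "r \<le> 1"
    using G gy by (simp_all add: r_def field_simps)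
  have "?g z = (1 - r) * ?g y + r * ?g q"
    unfolding z_def by (rule det2_affine_combination) simp
  also have "\<dots> = 0"
    using den by (simp add: r_def field_simps)
  finally have "?g z = 0" .
  moreover have "z \<in> convex hull (insert q S)"
    unfolding z_def using y r u hull_mono[of S "insert q S"]
    by (intro convexD[OF convex_convex_hull]) (auto intro: hull_inc)
  moreover have "closed_segment a p \<subseteq> convex hull S"
    using assms(1,2) by (simp add: closed_segment_subset hull_inc)
  ultimately have "z \<in> convex hull S"
    using G C mem_closed_segment_det2[of p a q z] by auto
  then have "closed_segment y z \<subseteq> convex hull S"
    using y by (simp add: closed_segment_subset)
  then show ?thesis
    using mem_closed_segment_shrink[of u r y q] u r by (auto simp: x_eq z_def)
qed

lemma convex_hull_insert_eq_Un_triangle: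
  fixes S :: "(real \<times> real) set"
  assumes "a \<in> S" "p \<in> S" and G: "det2 (p - a) (q - a) > 0"
    and right_ap: "\<forall>w\<in>S. det2 (p - a) (w - a) \<le> 0"
    and right_aq: "\<forall>w\<in>S. det2 (q - a) (w - a) \<le> 0"
    and left_pq: "\<forall>w\<in>S. 0 \<le> det2 (q - p) (w - p)"
  shows "convex hull (insert q S) = convex hull S \<union> convex hull {a, p, q}"
proof
  show "convex hull S \<union> convex hull {a, p, q} \<subseteq> convex hull (insert q S)"
    using assms(1,2) hull_mono[of S "insert q S"] hull_mono[of "{a, p, q}" "insert q S"] by auto
  have C: "convex hull (insert q S) \<subseteq> {w. det2 (q - a) (w - a) \<le> 0} \<inter> {w. 0 \<le> det2 (q - p) (w - p)}"
    using right_aq left_pq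
    by (intro hull_minimal) (auto simp: det2_self intro: convex_Int convex_det2_le convex_det2_ge)
  show "convex hull (insert q S) \<subseteq> convex hull S \<union> convex hull {a, p, q}"
  proof
    fix x assume x: "x \<in> convex hull (insert q S)"
    show "x \<in> convex hull S \<union> convex hull {a, p, q}"
    proof (cases "0 \<le> det2 (p - a) (x - a)")
      case True
      then show ?thesis
        using G C x by (auto intro: mem_convex_hull_triangle_det2)
    next
      case False
      then show ?thesis
        using mem_convex_hull_insert_below_line[OF assms x] by simp
    qed
  qed
qed

lemma det2_eq_0_if_collinear_outside_segment:
  fixes S :: "(real \<times> real) set"
  assumes "p \<noteq> a" and G: "det2 (p - a) (q - a) = 0" and q: "q \<notin> closed_segment a p"
    and right_ap: "\<forall>w\<in>S. det2 (p - a) (w - a) \<le> 0"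
    and right_aq: "\<forall>w\<in>S. det2 (q - a) (w - a) \<le> 0"
    and left_pq: "\<forall>w\<in>S. 0 \<le> det2 (q - p) (w - p)"
  shows "\<forall>w\<in>S. det2 (p - a) (w - a) = 0"
proof
  define mu where "mu = ((p - a) \<bullet> (q - a)) / ((p - a) \<bullet> (p - a))"
  have q_eq: "q - a = mu *\<^sub>R (p - a)"
    unfolding mu_def using G assms(1) by (intro det2_eq_0_imp_parallel) auto
  have mu: "mu < 0 \<or> 1 < mu"
  proof (rule ccontr)
    assume "\<not> (mu < 0 \<or> 1 < mu)"
    then have "q \<in> closed_segment a p"
      using q_eq unfolding closed_segment_def by (auto intro!: exI[of _ mu] simp: algebra_simps)
    then show False
      using q by blast
  qed
  fix w assume w: "w \<in> S"
  have qp: "q - p = (mu - 1) *\<^sub>R (p - a)" and wp: "w - p = (w - a) - (p - a)"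
    using q_eq by (simp_all add: algebra_simps)
  have "det2 (q - p) (w - p) = (mu - 1) * det2 (p - a) (w - a)"
    unfolding qp wp by (simp add: det2_def algebra_simps)
  then have "0 \<le> (mu - 1) * det2 (p - a) (w - a)"
    using left_pq w by metis
  moreover have "mu * det2 (p - a) (w - a) \<le> 0"
    using right_aq w q_eq by (simp add: det2_scaleR_left)
  moreover have "det2 (p - a) (w - a) \<le> 0"
    using right_ap w by blast
  ultimately show "det2 (p - a) (w - a) = 0"
    using mu by (auto simp: mult_le_0_iff zero_le_mult_iff)
qed

lemma convex_hull_insert_in_det2_line:
  fixes S :: "(real \<times> real) set"
  assumes "a \<in> S" "p \<in> S" and G: "det2 (p - a) (q - a) = 0"
    and q: "q \<notin> convex hull S"
    and right_ap: "\<forall>w\<in>S. det2 (p - a) (w - a) \<le> 0"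
    and right_aq: "\<forall>w\<in>S. det2 (q - a) (w - a) \<le> 0"
    and left_pq: "\<forall>w\<in>S. 0 \<le> det2 (q - p) (w - p)"
  obtains d b where "d \<noteq> 0" "convex hull (insert q S) \<subseteq> {w. det2 d (w - b) = 0}"
proof -
  have "\<exists>d. d \<noteq> 0 \<and> (\<forall>w\<in>insert q S. det2 d (w - a) = 0)"
  proof (cases "p = a")
    case True
    then have "q - a \<noteq> 0"
      using q assms(1) by (auto intro: hull_inc)
    moreover have "\<forall>w\<in>insert q S. det2 (q - a) (w - a) = 0"
      using right_aq left_pq True by (force simp: det2_self)
    ultimately show ?thesis by blast
  next
    case False
    have "closed_segment a p \<subseteq> convex hull S"
      using assms(1,2) by (simp add: closed_segment_subset hull_inc)
    then have "q \<notin> closed_segment a p"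
      using q by blast
    then have "\<forall>w\<in>S. det2 (p - a) (w - a) = 0"
      using det2_eq_0_if_collinear_outside_segment False G right_ap right_aq left_pq by blast
    then show ?thesis
      using G False by (intro exI[of _ "p - a"]) auto
  qed
  then obtain d where "d \<noteq> 0" "\<forall>w\<in>insert q S. det2 d (w - a) = 0"
    by blast
  moreover from this have "convex hull (insert q S) \<subseteq> {w. det2 d (w - a) = 0}"
    by (intro hull_minimal) (auto simp: convex_det2_eq)
  ultimately show ?thesis
    using that by blast
qed

lemma measure_convex_hull_insert_degenerate:
  fixes S :: "(real \<times> real) set"
  assumes "a \<in> S" "p \<in> S" and G: "det2 (p - a) (q - a) = 0"
    and right_ap: "\<forall>w\<in>S. det2 (p - a) (w - a) \<le> 0"
    and right_aq: "\<forall>w\<in>S. det2 (q - a) (w - a) \<le> 0"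
    and left_pq: "\<forall>w\<in>S. 0 \<le> det2 (q - p) (w - p)"
  shows "measure lebesgue (convex hull (insert q S)) = measure lebesgue (convex hull S)"
proof (cases "q \<in> convex hull S")
  case False
  then obtain d b where "d \<noteq> 0" "convex hull (insert q S) \<subseteq> {w. det2 d (w - b) = 0}"
    by (rule convex_hull_insert_in_det2_line[OF assms(1,2) G _ right_ap right_aq left_pq])
  then have "negligible (convex hull (insert q S))"
    using negligible_det2_line negligible_subset by blast
  moreover have "convex hull S \<subseteq> convex hull (insert q S)"
    by (rule hull_mono) blast
  ultimately have "negligible (convex hull (insert q S))" "negligible (convex hull S)"
    using negligible_subset by blast+
  then show ?thesis
    by (simp add: negligible_imp_measure0)
qed (simp add: hull_redundant)

lemma measure_convex_hull_insert_fan: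
  fixes S :: "(real \<times> real) set"
  assumes "finite S" "a \<in> S" "p \<in> S" and "0 \<le> det2 (p - a) (q - a)"
    and right_ap: "\<forall>w\<in>S. det2 (p - a) (w - a) \<le> 0"
    and right_aq: "\<forall>w\<in>S. det2 (q - a) (w - a) \<le> 0"
    and left_pq: "\<forall>w\<in>S. 0 \<le> det2 (q - p) (w - p)"
  shows "measure lebesgue (convex hull (insert q S))
           = measure lebesgue (convex hull S) + det2 (p - a) (q - a) / 2"
proof (cases "det2 (p - a) (q - a) = 0")
  case True
  then show ?thesis
    using measure_convex_hull_insert_degenerate assms(2,3) right_ap right_aq left_pq by simp
next
  case False
  then have G: "0 < det2 (p - a) (q - a)"
    using assms(4) by simp
  have hull_eq: "convex hull (insert q S) = convex hull S \<union> convex hull {a, p, q}"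
    using convex_hull_insert_eq_Un_triangle assms(2,3) G right_ap right_aq left_pq by blast
  have "convex hull S \<subseteq> {w. det2 (p - a) (w - a) \<le> 0}"
    using right_ap by (intro hull_minimal) (auto simp: convex_det2_le)
  moreover have "convex hull {a, p, q} \<subseteq> {w. 0 \<le> det2 (p - a) (w - a)}"
    using G by (intro hull_minimal) (auto simp: det2_self det2_zero_right convex_det2_ge)
  ultimately have "convex hull S \<inter> convex hull {a, p, q} \<subseteq> {w. det2 (p - a) (w - a) = 0}"
    by (blast intro: antisym)
  moreover have "p - a \<noteq> 0"
    using G by (auto simp: det2_zero_left)
  ultimately have "negligible (convex hull S \<inter> convex hull {a, p, q})"
    using negligible_det2_line negligible_subset by blast
  moreover have "measure lebesgue (convex hull S \<union> convex hull {a, p, q})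
      = measure lebesgue (convex hull S) + measure lebesgue (convex hull {a, p, q})
        - measure lebesgue (convex hull S \<inter> convex hull {a, p, q})"
    using assms(1) by (intro measure_Un3 lmeasurable_compact finite_imp_compact_convex_hull) auto
  ultimately show ?thesis
    using G by (simp add: hull_eq negligible_imp_measure0 measure_convex_hull_triangle)
qed

section \<open>Fan sums\<close>

lemma fan_sum_eq_shoelace:
  "(\<Sum>k<m. det2 (p k - p 0) (p (Suc k) - p 0)) = (\<Sum>k<m. det2 (p k) (p (Suc k))) - det2 (p 0) (p m)"
  by (induction m) (simp_all add: det2_def algebra_simps)

lemma fan_sum_difference:
  fixes p q a u :: "nat \<Rightarrow> real \<times> real"
  assumes p: "\<forall>k. p k = a k + c *\<^sub>R u k" and q: "\<forall>k. q k = a k - c *\<^sub>R u k"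
    and a_m: "a m = a 0" and u_m: "u m = - u 0"
    and alpha: "\<forall>k. a (Suc k) - a k = alpha k *\<^sub>R (u (Suc k) - u k)"
  shows "(\<Sum>k<m. det2 (p k - p 0) (p (Suc k) - p 0)) - (\<Sum>k<m. det2 (q k - q 0) (q (Suc k) - q 0))
           = 4 * c * (\<Sum>k<m. alpha k * det2 (u k) (u (Suc k)))"
proof -
  define Z where "Z k = det2 (a k) (u k)" for k
  have step: "det2 (p k) (p (Suc k)) - det2 (q k) (q (Suc k))
      = 2 * c * (Z (Suc k) - Z k) + 4 * c * (alpha k * det2 (u k) (u (Suc k)))" for k
  proof -
    have a_Suc: "a (Suc k) = a k + alpha k *\<^sub>R (u (Suc k) - u k)"
      using alpha by (metis add.commute diff_add_cancel)
    have pq: "p k = a k + c *\<^sub>R u k" "p (Suc k) = a (Suc k) + c *\<^sub>R u (Suc k)"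
      "q k = a k - c *\<^sub>R u k" "q (Suc k) = a (Suc k) - c *\<^sub>R u (Suc k)"
      using p q by blast+
    show ?thesis
      unfolding pq Z_def a_Suc by (simp add: det2_def algebra_simps)
  qed
  have "p 0 = a 0 + c *\<^sub>R u 0" "p m = a 0 - c *\<^sub>R u 0"
    "q 0 = a 0 - c *\<^sub>R u 0" "q m = a 0 + c *\<^sub>R u 0"
    using p q a_m u_m by simp_all
  then have ends: "det2 (p 0) (p m) - det2 (q 0) (q m) = - 4 * c * Z 0"
    by (simp only:) (simp add: Z_def det2_def algebra_simps)
  have "(\<Sum>k<m. det2 (p k - p 0) (p (Suc k) - p 0)) - (\<Sum>k<m. det2 (q k - q 0) (q (Suc k) - q 0))
      = (\<Sum>k<m. det2 (p k) (p (Suc k)) - det2 (q k) (q (Suc k))) - (det2 (p 0) (p m) - det2 (q 0) (q m))"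
    by (simp add: fan_sum_eq_shoelace sum_subtractf)
  also have "\<dots> = 2 * c * (Z m - Z 0) + 4 * c * (\<Sum>k<m. alpha k * det2 (u k) (u (Suc k))) + 4 * c * Z 0"
    by (simp add: step ends sum.distrib sum_distrib_left[symmetric] sum_lessThan_telescope)
  also have "Z m = - Z 0"
    using a_m u_m by (simp add: Z_def det2_minus_right)
  finally show ?thesis
    by simp
qed

section \<open>Polygons with edges parallel to those of U\<close>

lemma midpoint_plus_minus:
  fixes x y d :: "'a::real_vector"
  assumes "x - y = 2 *\<^sub>R d"
  shows "x = (1 / 2) *\<^sub>R (x + y) + d" "y = (1 / 2) *\<^sub>R (x + y) - d"
proof -
  have x: "x = y + d + d"
    using assms by (metis scaleR_2 add.commute diff_add_cancel add.assoc)
  then have "x + y = (y + d) + (y + d)"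
    by (simp add: algebra_simps)
  then have half: "(1 / 2) *\<^sub>R (x + y) = y + d"
    by (metis scaleR_half_double)
  show "x = (1 / 2) *\<^sub>R (x + y) + d" "y = (1 / 2) *\<^sub>R (x + y) - d"
    unfolding half using x by simp_all
qed

lemma mod_add_neq:
  fixes k d N :: nat
  assumes "0 < d" "d < N"
  shows "(k + d) mod N \<noteq> k mod N"
proof
  assume "(k + d) mod N = k mod N"
  then have "N dvd d"
    by (metis mod_add_self2 mod_eq_dvd_iff_nat le_add1 add_diff_cancel_left')
  then show False
    using assms by (simp add: nat_dvd_not_less)
qed

locale symmetric_convex_polygon =
  fixes n :: nat and U :: "nat \<Rightarrow> real \<times> real"
  assumes two_le_n: "2 \<le> n"
    and U_periodic: "\<forall>k. U (k + 2 * n) = U k"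
    and U_ccw: "\<forall>k j. j mod (2 * n) \<noteq> k mod (2 * n) \<and> j mod (2 * n) \<noteq> (k + 1) mod (2 * n)
                       \<longrightarrow> det2 (U (k + 1) - U k) (U j - U k) > 0"
    and U_antipodal: "\<forall>k. U (k + n) = - U k"
begin

lemma det2_edge_vertex_pos:
  assumes "2 \<le> d" "d < 2 * n"
  shows "0 < det2 (U (k + 1) - U k) (U (k + d) - U k)"
proof -
  have "(k + d) mod (2 * n) \<noteq> k mod (2 * n)"
    using assms by (intro mod_add_neq) auto
  moreover have "(k + 1 + (d - 1)) mod (2 * n) \<noteq> (k + 1) mod (2 * n)"
    using assms by (intro mod_add_neq) auto
  ultimately show ?thesis
    using U_ccw assms by auto
qed

lemma det2_consecutive_vertices_pos:
  assumes "p < x" "x + 1 < p + 2 * n"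
  shows "0 < det2 (U x - U p) (U (x + 1) - U p)"
proof -
  have "0 < det2 (U (x + 1) - U x) (U (x + (p + 2 * n - x)) - U x)"
    using assms by (intro det2_edge_vertex_pos) auto
  moreover have "U (x + (p + 2 * n - x)) = U p"
    using assms U_periodic by simp
  ultimately show ?thesis
    using det2_rotate[of "U x" "U p" "U (x + 1)"] by simp
qed

lemma det2_edge_vertex_nonneg:
  assumes "1 \<le> d" "d < 2 * n"
  shows "0 \<le> det2 (U (k + 1) - U k) (U (k + d) - U k)"
  using det2_edge_vertex_pos[of d k] assms by (cases "d = 1") (simp_all add: det2_self)

lemma det2_vertices_pos:
  assumes "p < q" "q < r" "r < p + 2 * n"
  shows "0 < det2 (U q - U p) (U r - U p)"
  using assms
proof (induction r)
  case (Suc r)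
  show ?case
  proof (cases "q = r")
    case True
    then show ?thesis
      using det2_consecutive_vertices_pos Suc.prems by simp
  next
    case False
    define e where "e = U (p + 1) - U p"
    define x where "x = U q - U p"
    define y where "y = U r - U p"
    define z where "z = U (Suc r) - U p"
    have "0 < det2 x y"
      using Suc False by (simp add: x_def y_def)
    moreover have "0 < det2 y z"
      using det2_consecutive_vertices_pos[of p r] Suc.prems False by (simp add: y_def z_def)
    moreover have "0 < det2 e y" "0 < det2 e z"
      using det2_edge_vertex_pos[of "r - p" p] det2_edge_vertex_pos[of "Suc r - p" p] Suc.prems False
      by (simp_all add: e_def y_def z_def)
    moreover have "0 \<le> det2 e x"
      using det2_edge_vertex_nonneg[of "q - p" p] Suc.prems by (simp add: e_def x_def)
    moreover have "det2 e y * det2 x z = det2 e x * det2 y z + det2 e z * det2 x y"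
      using det2_pluecker[of e y x z] det2_commute[of y x] by simp
    ultimately have "0 < det2 x z"
      by (smt (verit) mult_nonneg_nonneg mult_pos_pos zero_less_mult_pos)
    then show ?thesis
      by (simp add: x_def z_def)
  qed
qed simp

lemma det2_edges_pos:
  assumes "a < b" "b < a + n"
  shows "0 < det2 (U (a + 1) - U a) (U (b + 1) - U b)"
proof -
  define ea where "ea = U (a + 1) - U a"
  define eb where "eb = U (b + 1) - U b"
  define w1 where "w1 = U (a + n) - U b"
  define w2 where "w2 = U a - U b"
  have "w1 = U (a + (b + n - a)) - U a"
    using assms U_antipodal by (simp add: w1_def)
  then have 1: "0 < det2 ea w1"
    using det2_edge_vertex_pos[of "b + n - a" a] assms two_le_n unfolding ea_def by simp
  have "det2 ea w2 = - det2 ea (U (a + (b - a)) - U a)"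
    using assms by (simp add: w2_def det2_def algebra_simps)
  then have 2: "det2 ea w2 \<le> 0"
    using det2_edge_vertex_nonneg[of "b - a" a] assms unfolding ea_def by simp
  have "w2 = U (b + (a + 2 * n - b)) - U b"
    using assms U_periodic by (simp add: w2_def)
  then have 3: "0 < det2 eb w2"
    using det2_edge_vertex_pos[of "a + 2 * n - b" b] assms two_le_n unfolding eb_def by simp
  have "w1 = U (b + (a + n - b)) - U b"
    using assms by (simp add: w1_def)
  then have 4: "0 \<le> det2 eb w1"
    using det2_edge_vertex_nonneg[of "a + n - b" b] assms unfolding eb_def by simp
  have "0 < det2 (U (a + n) - U b) (U (a + 2 * n) - U b)"
    using assms two_le_n by (intro det2_vertices_pos) auto
  then have 5: "0 < det2 w1 w2"
    using U_periodic by (simp add: w1_def w2_def)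
  have "0 < det2 ea w1 * det2 eb w2" "det2 ea w2 * det2 eb w1 \<le> 0"
    using 1 2 3 4 by (simp_all add: mult_nonpos_nonneg)
  then have "0 < det2 ea w1 * det2 eb w2 - det2 ea w2 * det2 eb w1"
    by linarith
  then have "0 < det2 ea eb * det2 w1 w2"
    by (simp only: det2_pluecker[of ea eb w1 w2])
  then show ?thesis
    using 5 zero_less_mult_pos2 unfolding ea_def eb_def by blast
qed

end

locale parallel_polygon = symmetric_convex_polygon +
  fixes P :: "nat \<Rightarrow> real \<times> real" and t :: "nat \<Rightarrow> real"
  assumes P_edge: "\<forall>k. P (k + 1) - P k = t k *\<^sub>R (U (k + 1) - U k)"
    and t_nonneg: "\<forall>k. 0 \<le> t k"
begin

lemma P_diff_eq_sum: "P (j + m) - P j = (\<Sum>a\<in>{j..<j + m}. t a *\<^sub>R (U (a + 1) - U a))"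
proof (induction m)
  case (Suc m)
  have "P (j + Suc m) - P j = (P (j + m + 1) - P (j + m)) + (P (j + m) - P j)"
    by simp
  also have "\<dots> = t (j + m) *\<^sub>R (U (j + m + 1) - U (j + m))
      + (\<Sum>a\<in>{j..<j + m}. t a *\<^sub>R (U (a + 1) - U a))"
    using P_edge Suc.IH by simp
  finally show ?case
    by (simp add: add.commute)
qed simp

lemma det2_chain_nonneg:
  assumes "j \<le> l" "l \<le> r" "r \<le> j + n"
  shows "0 \<le> det2 (P l - P j) (P r - P j)"
proof -
  let ?e = "\<lambda>a. U (a + 1) - U a"
  have "det2 (P l - P j) (P r - P j) = det2 (P l - P j) (P r - P l)"
    by (simp add: det2_def algebra_simps)
  also have "\<dots> = (\<Sum>b\<in>{l..<r}. \<Sum>a\<in>{j..<l}. t b * (t a * det2 (?e a) (?e b)))"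
    using P_diff_eq_sum[of j "l - j"] P_diff_eq_sum[of l "r - l"] assms
    by (simp add: det2_sum_left det2_sum_right det2_scaleR_left det2_scaleR_right sum_distrib_left)
  also have "\<dots> \<ge> 0"
  proof (intro sum_nonneg)
    fix a b assume "b \<in> {l..<r}" "a \<in> {j..<l}"
    then have "0 < det2 (?e a) (?e b)"
      using assms by (intro det2_edges_pos) auto
    then show "0 \<le> t b * (t a * det2 (?e a) (?e b))"
      using t_nonneg by simp
  qed
  finally show ?thesis .
qed

lemma measure_convex_hull_fan:
  assumes "m \<le> n"
  shows "measure lebesgue (convex hull (P ` {s..s + m}))
           = (\<Sum>k<m. det2 (P (s + k) - P s) (P (s + k + 1) - P s)) / 2"
  using assms
proof (induction m)
  case 0
  then show ?case
    by (simp add: negligible_imp_measure0)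
next
  case (Suc m)
  let ?S = "P ` {s..s + m}"
  have "P ` {s..s + Suc m} = insert (P (s + m + 1)) ?S"
    by (simp add: atLeastAtMostSuc_conv)
  moreover have "measure lebesgue (convex hull (insert (P (s + m + 1)) ?S))
      = measure lebesgue (convex hull ?S) + det2 (P (s + m) - P s) (P (s + m + 1) - P s) / 2"
  proof (rule measure_convex_hull_insert_fan)
    show "0 \<le> det2 (P (s + m) - P s) (P (s + m + 1) - P s)"
      using Suc.prems by (intro det2_chain_nonneg) auto
    show "\<forall>w\<in>?S. det2 (P (s + m) - P s) (w - P s) \<le> 0"
      using Suc.prems det2_chain_nonneg[of s _ "s + m"] by (auto simp: det2_commute[of "P (s + m) - P s"])
    show "\<forall>w\<in>?S. det2 (P (s + m + 1) - P s) (w - P s) \<le> 0"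
      using Suc.prems det2_chain_nonneg[of s _ "s + m + 1"] by (auto simp: det2_commute[of "P (Suc (s + m)) - P s"])
    show "\<forall>w\<in>?S. 0 \<le> det2 (P (s + m + 1) - P (s + m)) (w - P (s + m))"
      using Suc.prems det2_chain_nonneg[of _ "s + m" "s + m + 1"]
      by (auto simp: det2_rotate[of "P (s + m)" _ "P (Suc (s + m))"])
  qed auto
  ultimately show ?case
    using Suc by (simp add: add_divide_distrib)
qed

lemma measure_convex_hull_halves_diff:
  assumes P_plus: "\<forall>k. P k = M k + c *\<^sub>R U k" and P_minus: "\<forall>k. P (k + n) = M k - c *\<^sub>R U k"
    and M_period: "M (i + n) = M i"
    and M_step: "\<forall>k. M (k + 1) - M k = alpha k *\<^sub>R (U (k + 1) - U k)"
  shows "measure lebesgue (convex hull (P ` {i..i + n}))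
           - measure lebesgue (convex hull (P ` {i + n..i + 2 * n}))
         = 2 * c * (\<Sum>k<n. alpha (i + k) * det2 (U (i + k)) (U (i + k + 1)))"
proof -
  have "(\<Sum>k<n. det2 (P (i + k) - P (i + 0)) (P (i + Suc k) - P (i + 0)))
      - (\<Sum>k<n. det2 (P (i + n + k) - P (i + n + 0)) (P (i + n + Suc k) - P (i + n + 0)))
      = 4 * c * (\<Sum>k<n. alpha (i + k) * det2 (U (i + k)) (U (i + Suc k)))"
  proof (rule fan_sum_difference)
    show "\<forall>k. P (i + k) = M (i + k) + c *\<^sub>R U (i + k)"
      using P_plus by blast
    show "\<forall>k. P (i + n + k) = M (i + k) - c *\<^sub>R U (i + k)"
    proof
      fix k
      have "i + n + k = (i + k) + n"
        by simp
      then show "P (i + n + k) = M (i + k) - c *\<^sub>R U (i + k)"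
        using P_minus by metis
    qed
    show "M (i + n) = M (i + 0)" "U (i + n) = - U (i + 0)"
      using M_period U_antipodal by simp_all
    show "\<forall>k. M (i + Suc k) - M (i + k) = alpha (i + k) *\<^sub>R (U (i + Suc k) - U (i + k))"
      using M_step by simp
  qed
  then have fans: "(\<Sum>k<n. det2 (P (i + k) - P i) (P (i + k + 1) - P i))
      - (\<Sum>k<n. det2 (P (i + n + k) - P (i + n)) (P (i + n + k + 1) - P (i + n)))
      = 4 * c * (\<Sum>k<n. alpha (i + k) * det2 (U (i + k)) (U (i + k + 1)))"
    by simp
  have "i + 2 * n = i + n + n"
    by simp
  then have "measure lebesgue (convex hull (P ` {i..i + n}))
      - measure lebesgue (convex hull (P ` {i + n..i + 2 * n}))
      = ((\<Sum>k<n. det2 (P (i + k) - P i) (P (i + k + 1) - P i))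
          - (\<Sum>k<n. det2 (P (i + n + k) - P (i + n)) (P (i + n + k + 1) - P (i + n)))) / 2"
    using measure_convex_hull_fan[of n i] measure_convex_hull_fan[of n "i + n"]
    by (simp only: diff_divide_distrib)
  also have "\<dots> = 2 * c * (\<Sum>k<n. alpha (i + k) * det2 (U (i + k)) (U (i + k + 1)))"
    using fans by simp
  finally show ?thesis .
qed

end

theorem proposition3p4:
  fixes n :: nat and U P M :: "nat \<Rightarrow> real \<times> real" and c :: real
    and alpha beta :: "nat \<Rightarrow> real" and i :: nat
  assumes n2: "n \<ge> 2"
    and U_per: "\<forall>k. U (k + 2 * n) = U k"
    and U_convex_ccw: "\<forall>k j. j mod (2 * n) \<noteq> k mod (2 * n) \<and> j mod (2 * n) \<noteq> (k + 1) mod (2 * n)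
                         \<longrightarrow> det2 (U (k + 1) - U k) (U j - U k) > 0"
    and U_sym: "\<forall>k. U (k + n) = - U k"
    and c_pos: "c > 0"
    and P_per: "\<forall>k. P (k + 2 * n) = P k"
    and P_convex_ccw: "\<forall>k j. det2 (P (k + 1) - P k) (P j - P k) \<ge> 0"
    and P_interior: "interior (convex hull (range P)) \<noteq> {}"
    and P_edges: "\<forall>k. \<exists>t\<ge>0. P (k + 1) - P k = t *\<^sub>R (U (k + 1) - U k)"
    and P_diam: "\<forall>k. P k - P (k + n) = (2 * c) *\<^sub>R U k"
    and M_def: "\<forall>k. M k = (1 / 2) *\<^sub>R (P k + P (k + n))"
    and alpha_def: "\<forall>k. M (k + 1) - M k = alpha k *\<^sub>R (U (k + 1) - U k)"
    and beta_def: "\<forall>k. beta k = 1 / 2 * (\<Sum>j = k..k + n - 1. alpha j * det2 (U j) (U (j + 1)))"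
    and i_range: "i \<in> {1..2 * n}"
  shows "measure lebesgue (convex hull (P ` {i..i + n}))
         - measure lebesgue (convex hull (P ` {i + n..i + 2 * n})) = 4 * c * beta i"
proof -
  have "\<exists>t. \<forall>k. 0 \<le> t k \<and> P (k + 1) - P k = t k *\<^sub>R (U (k + 1) - U k)"
    using P_edges by (intro choice) blast
  then obtain t where "\<forall>k. 0 \<le> t k \<and> P (k + 1) - P k = t k *\<^sub>R (U (k + 1) - U k)"
    by blast
  then interpret parallel_polygon n U P t
    using n2 U_per U_convex_ccw U_sym by unfold_locales auto
  have "P k - P (k + n) = 2 *\<^sub>R (c *\<^sub>R U k)" for k
    using P_diam by simp
  then have P_plus: "\<forall>k. P k = M k + c *\<^sub>R U k" and P_minus: "\<forall>k. P (k + n) = M k - c *\<^sub>R U k"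
    using M_def midpoint_plus_minus by metis+
  have "M (i + n) = (1 / 2) *\<^sub>R (P (i + n) + P (i + n + n))"
    using M_def by blast
  also have "P (i + n + n) = P i"
    using P_per by (metis mult_2 add.assoc)
  also have "(1 / 2) *\<^sub>R (P (i + n) + P i) = M i"
    using M_def by (simp add: add.commute)
  finally have M_period: "M (i + n) = M i" .
  have "(\<Sum>j = i..i + n - 1. alpha j * det2 (U j) (U (j + 1)))
      = (\<Sum>k<n. alpha (i + k) * det2 (U (i + k)) (U (i + k + 1)))"
    using n2 by (simp add: sum.atLeastAtMost_shift_0 atLeast0AtMost lessThan_Suc_atMost[symmetric])
  then show ?thesis
    using measure_convex_hull_halves_diff[OF P_plus P_minus M_period alpha_def] beta_def[rule_format, of i]
    by simp
qed

end
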